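(* Let $0<\nu<1$ and $0\le \mu<1$. Then for every $t>0$, $$f_{\nu,\mu}(t)=\frac{1}{\pi}\int_0^\infty u^{-\mu}\,\exp\!\big(-ut-u^{\nu}\cos(\pi\nu)\big)\,\sin\!\big(u^{\nu}\sin(\pi\nu)+\pi\mu\big)\,du .$$
   Context: For $0<\nu<1$ and real $\rho$, $f_{\nu,\rho}$ denotes the inverse Laplace transform of $F(s)=s^{-\rho}e^{-s^{\nu}}$, i.e. $f_{\nu,\rho}(t)=\frac{1}{2\pi i}\int_{c-i\infty}^{c+i\infty}e^{st}s^{-\rho}e^{-s^{\nu}}\,ds$ for $t>0$, $c>0$, with principal branches of the powers of $s$; thus $\int_0^\infty e^{-st}f_{\nu,\rho}(t)\,dt=s^{-\rho}e^{-s^\nu}$. *)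

theory Defs
  imports "HOL-Analysis.Analysis"
begin

text \<open>Inverse Laplace transform of F(s) = s^(-rho) * exp(-s^nu), given by the
Bromwich integral along the vertical line Re s = c (c > 0), principal branches.
With s = c + i y, ds = i dy, so (1/(2 pi i)) ds = (1/(2 pi)) dy.\<close>
definition bromwich_f :: "real \<Rightarrow> real \<Rightarrow> real \<Rightarrow> real \<Rightarrow> complex" where
  "bromwich_f \<nu> \<rho> c t =
     complex_of_real (1 / (2 * pi)) *
     (LBINT y. exp (Complex c y * complex_of_real t)
               * Complex c y powr (- complex_of_real \<rho>)
               * exp (- (Complex c y powr complex_of_real \<nu>)))"

end

theory Submission
  imports Defs "HOL-Complex_Analysis.Complex_Analysis" "HOL-Real_Asymp.Real_Asymp"
begin

text \<open>
  Continued from the upper half-plane with a logarithm cut along the negative imaginary axis,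
  the integrand \<open>F s = exp (s t) s\<^sup>-\<^sup>\<mu> exp (- s\<^sup>\<nu>)\<close> becomes holomorphic across the negative real axis.
  Cauchy's theorem on the contour \<open>[-R, -\<epsilon>]\<close>, a small square detour over 0, \<open>[\<epsilon>, c]\<close>,
  \<open>[c, c + i R]\<close> and a large polygonal arc back to \<open>-R\<close> gives, after taking imaginary parts
  (\<open>F\<close> is real on the positive axis and \<open>Im F (-u)\<close> is minus the integrand \<open>G u\<close> of the theorem),
  \<open>Re \<integral>\<^sub>0\<^sup>R F (c + i y) dy = \<integral>\<^sub>\<epsilon>\<^sup>R G - Im (detour) - Im (arc)\<close>.
  The detour is \<open>O(\<epsilon>\<^sup>1\<^sup>-\<^sup>\<mu>)\<close>, and the arc term vanishes as \<open>R \<rightarrow> \<infinity>\<close> because on the arc either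
  \<open>cos (\<nu> arg s)\<close> stays bounded away from 0 or \<open>Re s\<close> is a negative multiple of \<open>R\<close>.
  Finally \<open>F (c - i y) = cnj (F (c + i y))\<close>, so the Bromwich integral equals
  \<open>(1/\<pi>) Re \<integral>\<^sub>0\<^sup>\<infinity> F (c + i y) dy\<close>.
\<close>

lemma holomorphic_linepath_integral_primitive:
  fixes f :: "complex \<Rightarrow> complex"
  assumes "convex S" "open S" "f holomorphic_on S"
  obtains g where "\<And>a b. a \<in> S \<Longrightarrow> b \<in> S \<Longrightarrow> contour_integral (linepath a b) f = g b - g a"
proof -
  obtain g where g: "\<And>x. x \<in> S \<Longrightarrow> (g has_field_derivative f x) (at x within S)"
    using holomorphic_convex_primitive'[OF assms] by blast
  have "contour_integral (linepath a b) f = g b - g a" if "a \<in> S" "b \<in> S" for a b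
    using contour_integral_primitive[OF g, of "linepath a b"] closed_segment_subset[of a S b] that assms(1)
    by (auto intro: contour_integral_unique)
  then show ?thesis using that by blast
qed

lemma has_contour_integral_affine_linepath_iff:
  fixes a b :: real
  assumes "a < b"
  shows "(f has_contour_integral I) (linepath (w + of_real a * d) (w + of_real b * d))
           \<longleftrightarrow> ((\<lambda>x. d * f (w + of_real x * d)) has_integral I) {a..b}"
proof -
  have "(f has_contour_integral I) (linepath (w + of_real a * d) (w + of_real b * d))
          \<longleftrightarrow> ((\<lambda>z. d * f (w + z * d)) has_contour_integral I) (linepath (of_real a) (of_real b))"
    unfolding has_contour_integral_linepath
    by (rule arg_cong2[where f = "\<lambda>f S. (f has_integral I) S"])
       (auto simp: linepath_def algebra_simps fun_eq_iff)
  also have "\<dots> \<longleftrightarrow> ((\<lambda>x. d * f (w + of_real x * d)) has_integral I) {a..b}"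
    using assms by (subst has_contour_integral_linepath_Reals_iff) auto
  finally show ?thesis .
qed

lemma set_integrable_lborel_if_nonneg_integrable_on:
  fixes f :: "real \<Rightarrow> real"
  assumes "f integrable_on S" "\<And>x. x \<in> S \<Longrightarrow> 0 \<le> f x" "S \<in> sets borel" "f \<in> borel_measurable borel"
  shows "set_integrable lborel S f"
proof -
  have "integrable lebesgue (\<lambda>x. indicator S x *\<^sub>R f x)"
    using nonnegative_absolutely_integrable_1[OF assms(1,2)] unfolding set_integrable_def by simp
  moreover have "(\<lambda>x. indicator S x *\<^sub>R f x) \<in> borel_measurable borel"
    using assms(3,4) by measurable
  ultimately show ?thesis
    unfolding set_integrable_def by (subst (asm) integrable_completion) auto
qed

lemma set_integrable_atLeast_if_powr_bound:
  fixes f :: "real \<Rightarrow> 'a::{banach, second_countable_topology}"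
  assumes "continuous_on {a..} f" "eventually (\<lambda>x. norm (f x) \<le> x powr (- 2)) at_top"
  shows "set_integrable lborel {a..} f"
proof -
  obtain Y0 where Y0: "\<And>x. Y0 \<le> x \<Longrightarrow> norm (f x) \<le> x powr (- 2)"
    using assms(2) unfolding eventually_at_top_linorder by blast
  define Y where "Y = max a (max Y0 1)"
  have "1 \<le> Y" "a \<le> Y" "Y0 \<le> Y"
    by (auto simp: Y_def)
  have "set_integrable lborel {a..Y} f"
    by (rule borel_integrable_atLeastAtMost') (rule continuous_on_subset[OF assms(1)], auto)
  moreover have "set_integrable lborel {Y..} f"
  proof (rule set_integrable_bound)
    show "set_integrable lborel {Y..} (\<lambda>x::real. x powr (- 2))"
      using has_integral_powr_to_inf[of "- 2" Y] \<open>1 \<le> Y\<close>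
      by (intro set_integrable_lborel_if_nonneg_integrable_on) (auto simp: integrable_on_def)
    show "set_borel_measurable lborel {Y..} f"
      unfolding set_borel_measurable_def measurable_lborel2
      using \<open>a \<le> Y\<close> by (intro borel_measurable_continuous_on_indicator continuous_on_subset[OF assms(1)]) auto
    show "AE x in lborel. x \<in> {Y..} \<longrightarrow> norm (f x) \<le> norm (x powr (- 2))"
      using Y0 \<open>Y0 \<le> Y\<close> by (intro AE_I2) auto
  qed
  ultimately have "set_integrable lborel ({a..Y} \<union> {Y..}) f"
    by (rule set_integrable_Un) auto
  moreover have "{a..Y} \<union> {Y..} = {a..}"
    using \<open>a \<le> Y\<close> by auto
  ultimately show ?thesis
    by simp
qed

lemma integrable_lborel_if_halflines:
  fixes f :: "real \<Rightarrow> 'a::{banach, second_countable_topology}"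
  assumes "set_integrable lborel {0..} f" "set_integrable lborel {0..} (\<lambda>x. f (- x))"
  shows "integrable lborel f"
proof -
  have "integrable lborel (\<lambda>x. indicator {..0} (0 + (- 1) * x) *\<^sub>R f (0 + (- 1) * x))"
    using assms(2) unfolding set_integrable_def by (simp add: indicator_def)
  then have "set_integrable lborel {..0} f"
    unfolding set_integrable_def by (subst (asm) lborel_integrable_real_affine_iff) auto
  then have "set_integrable lborel ({0..} \<union> {..0}) f"
    using assms(1) by (intro set_integrable_Un) auto
  moreover have "{0..} \<union> {..0} = (UNIV :: real set)"
    by auto
  ultimately show ?thesis
    unfolding set_integrable_def by simp
qed

lemma lborel_integral_eq_two_Re_if_cnj_symmetric:
  fixes f :: "real \<Rightarrow> complex"
  assumes "integrable lborel f" "\<And>y. f (- y) = cnj (f y)"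
  shows "integral\<^sup>L lborel f = complex_of_real (2 * Re (LBINT y:{0..}. f y))"
proof -
  have int: "set_integrable lborel A f" if "A \<in> sets lborel" for A
    unfolding set_integrable_def using assms(1) that by (intro integrable_mult_indicator) auto
  have "{0..} \<union> {..<0} = (UNIV :: real set)"
    by auto
  then have "integral\<^sup>L lborel f = (LBINT y:({0..} \<union> {..<0}). f y)"
    unfolding set_lebesgue_integral_def by simp
  also have "\<dots> = (LBINT y:{0..}. f y) + (LBINT y:{..<0}. f y)"
    by (rule set_integral_Un) (auto intro: int)
  also have "(LBINT y:{..<0}. f y) = (LBINT y:{0<..}. cnj (f y))"
    by (subst set_integral_reflect) (simp add: assms(2) greaterThan_def)
  also have "\<dots> = cnj (LBINT y:{0<..}. f y)"
    unfolding set_lebesgue_integral_def by (simp flip: complex_cnj_scaleR del: complex_cnj_scaleR)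
  also have "(LBINT y:{0<..}. f y) = (LBINT y:{0..}. f y)"
    by (rule set_integral_discrete_difference[where X = "{0}"]) auto
  finally show ?thesis
    by (simp add: complex_add_cnj)
qed

definition bromwich_integrand :: "real \<Rightarrow> real \<Rightarrow> real \<Rightarrow> complex \<Rightarrow> complex" where
  "bromwich_integrand \<nu> \<rho> t s =
     exp (s * complex_of_real t) * s powr (- complex_of_real \<rho>) * exp (- (s powr complex_of_real \<nu>))"

definition cut_integrand :: "real \<Rightarrow> real \<Rightarrow> real \<Rightarrow> real \<Rightarrow> real" where
  "cut_integrand \<nu> \<mu> t u = u powr (- \<mu>) * exp (- u * t - u powr \<nu> * cos (pi * \<nu>))
                             * sin (u powr \<nu> * sin (pi * \<nu>) + pi * \<mu>)"

lemma bromwich_f_eq_integral_bromwich_integrand: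
  "bromwich_f \<nu> \<rho> c t = complex_of_real (1 / (2 * pi)) * (LBINT y. bromwich_integrand \<nu> \<rho> t (Complex c y))"
  unfolding bromwich_f_def bromwich_integrand_def ..

lemma bromwich_integrand_eq_exp:
  assumes "s \<noteq> 0"
  shows "bromwich_integrand \<nu> \<rho> t s
           = exp (s * complex_of_real t - complex_of_real \<rho> * Ln s - exp (complex_of_real \<nu> * Ln s))"
  using assms by (simp add: bromwich_integrand_def powr_def exp_diff exp_add exp_minus field_simps)

lemma norm_bromwich_integrand:
  assumes "s \<noteq> 0"
  shows "norm (bromwich_integrand \<nu> \<rho> t s)
           = exp (t * Re s) * cmod s powr (- \<rho>) * exp (- (cmod s powr \<nu> * cos (\<nu> * Im (Ln s))))"
  using assms by (simp add: bromwich_integrand_def norm_mult norm_powr_real_powr powr_def Re_exp mult.commute)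

lemma Re_eq_norm_cos_Im_Ln:
  assumes "s \<noteq> 0"
  shows "Re s = cmod s * cos (Im (Ln s))"
proof -
  have "Re s = Re (exp (Ln s))" using assms by simp
  also have "\<dots> = cmod s * cos (Im (Ln s))" using assms by (subst Re_exp) simp
  finally show ?thesis .
qed

lemma Re_le_mult_cos_if_Im_Ln_ge:
  assumes "s \<noteq> 0" "0 \<le> \<phi>" "\<phi> \<le> Im (Ln s)" "cos \<phi> \<le> 0" "R \<le> cmod s"
  shows "Re s \<le> R * cos \<phi>"
proof -
  have "Re s = cmod s * cos (Im (Ln s))"
    by (rule Re_eq_norm_cos_Im_Ln[OF assms(1)])
  also have "\<dots> \<le> cmod s * cos \<phi>"
    using assms Im_Ln_le_pi[of s] by (intro mult_left_mono cos_monotone_0_pi_le) auto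
  also have "\<dots> \<le> R * cos \<phi>"
    using assms by (intro mult_right_mono_neg) auto
  finally show ?thesis .
qed

lemma bromwich_integrand_cnj:
  assumes "0 < Re s"
  shows "bromwich_integrand \<nu> \<rho> t (cnj s) = cnj (bromwich_integrand \<nu> \<rho> t s)"
  using assms by (simp add: bromwich_integrand_def cnj_powr exp_cnj)

lemma Im_bromwich_integrand_of_real:
  assumes "0 < x"
  shows "Im (bromwich_integrand \<nu> \<rho> t (complex_of_real x)) = 0"
proof -
  have "bromwich_integrand \<nu> \<rho> t (complex_of_real x)
          = complex_of_real (exp (x * t) * x powr (- \<rho>) * exp (- (x powr \<nu>)))"
    using assms by (simp add: bromwich_integrand_def powr_of_real exp_of_real flip: of_real_mult of_real_minus)
  then show ?thesis by simp
qed

lemma Im_bromwich_integrand_minus_of_real: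
  assumes "0 < u"
  shows "Im (bromwich_integrand \<nu> \<mu> t (- complex_of_real u)) = - cut_integrand \<nu> \<mu> t u"
proof -
  define Z where "Z = - complex_of_real u * complex_of_real t - complex_of_real \<mu> * Ln (- complex_of_real u)
                      - exp (complex_of_real \<nu> * Ln (- complex_of_real u))"
  have Ln: "Ln (- complex_of_real u) = complex_of_real (ln u) + \<i> * pi"
    using assms by (intro Ln_unique) (auto simp: exp_add exp_of_real)
  have ReZ: "Re Z = - u * t - u powr \<nu> * cos (pi * \<nu>) - \<mu> * ln u"
    using assms by (simp add: Z_def Ln Re_exp powr_def field_simps)
  have ImZ: "Im Z = - (u powr \<nu> * sin (pi * \<nu>) + pi * \<mu>)"
    using assms by (simp add: Z_def Ln Im_exp powr_def field_simps)
  have "Im (exp Z) = exp (- u * t - u powr \<nu> * cos (pi * \<nu>) - \<mu> * ln u)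
                      * sin (- (u powr \<nu> * sin (pi * \<nu>) + pi * \<mu>))"
    by (simp only: Im_exp ReZ ImZ)
  also have "\<dots> = - cut_integrand \<nu> \<mu> t u"
    using assms by (subst sin_minus) (simp add: cut_integrand_def powr_def exp_diff exp_minus divide_inverse mult_ac)
  finally show ?thesis
    using assms by (simp add: bromwich_integrand_eq_exp Z_def)
qed

lemma norm_bromwich_integrand_le_near_0:
  assumes "0 \<le> \<nu>" "0 \<le> \<mu>" "0 \<le> t" "0 < e" "e \<le> cmod s" "cmod s \<le> 1"
  shows "norm (bromwich_integrand \<nu> \<mu> t s) \<le> exp (t + 1) * e powr (- \<mu>)"
proof -
  have "t * Re s \<le> t * 1"
    using assms complex_Re_le_cmod[of s] by (intro mult_left_mono) auto
  moreover have "- (cmod s powr \<nu> * cos (\<nu> * Im (Ln s))) \<le> 1"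
  proof -
    have "- (cmod s powr \<nu> * cos (\<nu> * Im (Ln s))) \<le> cmod s powr \<nu>"
      using mult_left_mono[of "- cos (\<nu> * Im (Ln s))" 1 "cmod s powr \<nu>"] by simp
    also have "\<dots> \<le> 1"
      using assms by (intro powr_le1) auto
    finally show ?thesis .
  qed
  ultimately have "exp (t * Re s) * exp (- (cmod s powr \<nu> * cos (\<nu> * Im (Ln s)))) \<le> exp t * exp 1"
    by (intro mult_mono) auto
  moreover have "cmod s powr (- \<mu>) \<le> e powr (- \<mu>)"
    using assms by (intro powr_mono2') auto
  ultimately have "exp (t * Re s) * exp (- (cmod s powr \<nu> * cos (\<nu> * Im (Ln s)))) * cmod s powr (- \<mu>)
                     \<le> exp t * exp 1 * e powr (- \<mu>)"
    by (rule mult_mono) auto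
  moreover have "s \<noteq> 0"
    using assms by auto
  ultimately show ?thesis
    by (simp add: norm_bromwich_integrand exp_add mult_ac)
qed

lemma norm_bromwich_integrand_le_exp:
  assumes "0 \<le> \<mu>" "1 \<le> cmod s"
  shows "norm (bromwich_integrand \<nu> \<mu> t s) \<le> exp (t * Re s - cmod s powr \<nu> * cos (\<nu> * Im (Ln s)))"
proof -
  have "s \<noteq> 0"
    using assms by auto
  then have "norm (bromwich_integrand \<nu> \<mu> t s)
               = exp (t * Re s - cmod s powr \<nu> * cos (\<nu> * Im (Ln s))) * cmod s powr (- \<mu>)"
    by (simp add: norm_bromwich_integrand exp_diff exp_minus field_simps)
  also have "\<dots> \<le> exp (t * Re s - cmod s powr \<nu> * cos (\<nu> * Im (Ln s))) * 1"
    using powr_mono2'[of "- \<mu>" 1 "cmod s"] assms by (intro mult_left_mono) auto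
  finally show ?thesis
    by simp
qed

text \<open>Points of the arc with argument at most \<open>\<phi>\<close> are controlled by \<open>exp (- cos (\<nu> \<phi>) \<bar>s\<bar>\<^sup>\<nu>)\<close>,
  the others by \<open>exp (t Re s)\<close> with \<open>Re s \<le> R cos \<phi> < 0\<close>.\<close>

lemma norm_bromwich_integrand_le_far:
  assumes "0 \<le> \<nu>" "0 \<le> \<mu>" "0 \<le> t" "pi / 2 \<le> \<phi>" "\<phi> \<le> pi" "\<nu> * \<phi> \<le> pi / 2"
    and "1 \<le> R" "0 \<le> Im s" "R \<le> cmod s" "cmod s \<le> 2 * R" "Re s \<le> c"
  shows "norm (bromwich_integrand \<nu> \<mu> t s)
           \<le> exp (t * c - cos (\<nu> * \<phi>) * R powr \<nu>) + exp (t * R * cos \<phi> + (2 * R) powr \<nu>)"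
proof -
  define \<theta> where "\<theta> = Im (Ln s)"
  have s0: "s \<noteq> 0"
    using assms by auto
  have \<theta>: "0 \<le> \<theta>" "\<theta> \<le> pi"
    using Im_Ln_pos_le[OF s0] assms by (auto simp: \<theta>_def)
  have norm_le: "norm (bromwich_integrand \<nu> \<mu> t s) \<le> exp (t * Re s - cmod s powr \<nu> * cos (\<nu> * \<theta>))"
    unfolding \<theta>_def using assms by (intro norm_bromwich_integrand_le_exp) auto
  show ?thesis
  proof (cases "\<theta> \<le> \<phi>")
    case True
    have "cos (\<nu> * \<phi>) \<le> cos (\<nu> * \<theta>)"
      using assms \<theta> True by (intro cos_monotone_0_pi_le mult_left_mono mult_nonneg_nonneg) auto
    moreover have "0 \<le> cos (\<nu> * \<phi>)"
      using assms by (intro cos_ge_zero) (auto intro: order_trans[of _ 0])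
    moreover have "R powr \<nu> \<le> cmod s powr \<nu>"
      using assms by (intro powr_mono2) auto
    ultimately have "cos (\<nu> * \<phi>) * R powr \<nu> \<le> cmod s powr \<nu> * cos (\<nu> * \<theta>)"
      by (metis mult.commute mult_mono powr_ge_zero)
    moreover have "t * Re s \<le> t * c"
      using assms by (intro mult_left_mono) auto
    ultimately have "exp (t * Re s - cmod s powr \<nu> * cos (\<nu> * \<theta>)) \<le> exp (t * c - cos (\<nu> * \<phi>) * R powr \<nu>)"
      by simp
    then show ?thesis
      using norm_le by (meson add_increasing2 exp_ge_zero order_trans)
  next
    case False
    have "0 \<le> cos (pi - \<phi>)"
      using assms by (intro cos_ge_zero) auto
    then have "Re s \<le> R * cos \<phi>"
      using False s0 assms pi_gt_zero unfolding \<theta>_def by (intro Re_le_mult_cos_if_Im_Ln_ge) auto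
    then have "t * Re s \<le> t * R * cos \<phi>"
      using assms by (simp add: mult_left_mono mult.assoc)
    moreover have "- (cmod s powr \<nu> * cos (\<nu> * \<theta>)) \<le> cmod s powr \<nu>"
      using mult_left_mono[of "- cos (\<nu> * \<theta>)" 1 "cmod s powr \<nu>"] by simp
    moreover have "cmod s powr \<nu> \<le> (2 * R) powr \<nu>"
      using assms by (intro powr_mono2) auto
    ultimately have "exp (t * Re s - cmod s powr \<nu> * cos (\<nu> * \<theta>)) \<le> exp (t * R * cos \<phi> + (2 * R) powr \<nu>)"
      by simp
    then show ?thesis
      using norm_le by (meson add_increasing exp_ge_zero order_trans)
  qed
qed

lemma norm_bromwich_integrand_vertical_le:
  assumes "0 \<le> \<nu>" "\<nu> \<le> 1" "0 \<le> \<mu>" "0 < c"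
  shows "norm (bromwich_integrand \<nu> \<mu> t (Complex c y))
           \<le> exp (t * c) * c powr (- \<mu>) * exp (- (cos (\<nu> * pi / 2) * \<bar>y\<bar> powr \<nu>))"
proof -
  define s where "s = Complex c y"
  define \<theta> where "\<theta> = Im (Ln s)"
  have s0: "s \<noteq> 0" using assms by (auto simp: s_def complex_eq_iff)
  have "\<bar>\<theta>\<bar> \<le> pi / 2"
    unfolding \<theta>_def by (subst Re_Ln_pos_le[OF s0]) (use assms in \<open>simp add: s_def\<close>)
  then have "\<bar>\<nu> * \<theta>\<bar> \<le> \<nu> * (pi / 2)"
    using assms mult_left_mono[of "\<bar>\<theta>\<bar>" "pi / 2" \<nu>] by (simp only: abs_mult abs_of_nonneg)
  moreover have \<nu>pi: "0 \<le> \<nu> * pi / 2" "\<nu> * pi / 2 \<le> pi / 2"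
    using assms mult_right_mono[of \<nu> 1 pi] by auto
  ultimately have "cos (\<nu> * pi / 2) \<le> cos \<bar>\<nu> * \<theta>\<bar>"
    using pi_gt_zero by (intro cos_monotone_0_pi_le) simp_all
  moreover have "0 \<le> cos (\<nu> * pi / 2)"
    using \<nu>pi pi_gt_zero by (intro cos_ge_zero) linarith+
  moreover have "\<bar>y\<bar> powr \<nu> \<le> cmod s powr \<nu>"
    using abs_Im_le_cmod[of s] assms by (intro powr_mono2) (auto simp: s_def)
  ultimately have "cos (\<nu> * pi / 2) * \<bar>y\<bar> powr \<nu> \<le> cmod s powr \<nu> * cos (\<nu> * \<theta>)"
    by (metis cos_abs_real mult.commute mult_mono powr_ge_zero)
  then have exp_le: "exp (- (cmod s powr \<nu> * cos (\<nu> * \<theta>))) \<le> exp (- (cos (\<nu> * pi / 2) * \<bar>y\<bar> powr \<nu>))"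
    by simp
  have powr_le: "cmod s powr (- \<mu>) \<le> c powr (- \<mu>)"
    using abs_Re_le_cmod[of s] assms by (intro powr_mono2') (auto simp: s_def)
  have "norm (bromwich_integrand \<nu> \<mu> t s) = exp (t * c) * cmod s powr (- \<mu>) * exp (- (cmod s powr \<nu> * cos (\<nu> * \<theta>)))"
    using s0 by (simp add: norm_bromwich_integrand \<theta>_def s_def)
  also have "\<dots> \<le> exp (t * c) * c powr (- \<mu>) * exp (- (cos (\<nu> * pi / 2) * \<bar>y\<bar> powr \<nu>))"
    using powr_le exp_le by (intro mult_mono mult_left_mono) auto
  finally show ?thesis
    by (simp add: s_def)
qed

section \<open>Integrability on the Bromwich line and along the cut\<close>

lemma abs_cut_integrand_le:
  assumes "0 \<le> u"
  shows "\<bar>cut_integrand \<nu> \<mu> t u\<bar> \<le> u powr (- \<mu>) * exp (- u * t + u powr \<nu>)"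
proof -
  have "- (u powr \<nu> * cos (pi * \<nu>)) \<le> u powr \<nu>"
    using mult_left_mono[of "- cos (pi * \<nu>)" 1 "u powr \<nu>"] by simp
  then have "exp (- u * t - u powr \<nu> * cos (pi * \<nu>)) \<le> exp (- u * t + u powr \<nu>)"
    by simp
  have "\<bar>cut_integrand \<nu> \<mu> t u\<bar>
          = u powr (- \<mu>) * exp (- u * t - u powr \<nu> * cos (pi * \<nu>)) * \<bar>sin (u powr \<nu> * sin (pi * \<nu>) + pi * \<mu>)\<bar>"
    by (simp add: cut_integrand_def abs_mult)
  also have "\<dots> \<le> u powr (- \<mu>) * exp (- u * t - u powr \<nu> * cos (pi * \<nu>)) * 1"
    by (intro mult_left_mono abs_sin_le_one) auto
  also have "\<dots> \<le> u powr (- \<mu>) * exp (- u * t + u powr \<nu>)"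
    using \<open>exp _ \<le> exp _\<close> by (simp add: mult_left_mono)
  finally show ?thesis .
qed

lemma set_integrable_cut_integrand_unit_interval:
  assumes "0 \<le> \<nu>" "0 \<le> \<mu>" "\<mu> < 1" "0 \<le> t"
  shows "set_integrable lborel {0..1} (cut_integrand \<nu> \<mu> t)"
proof (rule set_integrable_bound)
  show "set_integrable lborel {0..1} (\<lambda>u. exp 1 * u powr (- \<mu>))"
    using assms integrable_on_powr_from_0[of "- \<mu>" 1]
    by (intro set_integrable_mult_right set_integrable_lborel_if_nonneg_integrable_on) auto
  show "set_borel_measurable lborel {0..1} (cut_integrand \<nu> \<mu> t)"
    unfolding set_borel_measurable_def cut_integrand_def by measurable
  have "\<bar>cut_integrand \<nu> \<mu> t u\<bar> \<le> exp 1 * u powr (- \<mu>)" if "u \<in> {0..1}" for u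
  proof -
    have "u powr \<nu> \<le> 1" "0 \<le> u * t"
      using that assms by (auto intro: powr_le1)
    then have "exp (- u * t + u powr \<nu>) \<le> exp 1"
      by simp
    then have "u powr (- \<mu>) * exp (- u * t + u powr \<nu>) \<le> u powr (- \<mu>) * exp 1"
      by (rule mult_left_mono) simp
    then show ?thesis
      using that abs_cut_integrand_le[of u \<nu> \<mu> t] by (simp add: mult.commute)
  qed
  then show "AE u in lborel. u \<in> {0..1} \<longrightarrow> norm (cut_integrand \<nu> \<mu> t u) \<le> norm (exp 1 * u powr (- \<mu>))"
    by (intro AE_I2) auto
qed

lemma set_integrable_cut_integrand_tail:
  assumes "\<nu> < 1" "0 \<le> \<mu>" "0 < t"
  shows "set_integrable lborel {1..} (cut_integrand \<nu> \<mu> t)"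
proof (rule set_integrable_atLeast_if_powr_bound)
  show "continuous_on {1..} (cut_integrand \<nu> \<mu> t)"
    unfolding cut_integrand_def by (intro continuous_intros) auto
  have "eventually (\<lambda>u. exp (- u * t + u powr \<nu>) \<le> u powr (- 2)) at_top"
    using assms by real_asymp
  then show "eventually (\<lambda>u. norm (cut_integrand \<nu> \<mu> t u) \<le> u powr (- 2)) at_top"
    using eventually_ge_at_top[of "1 :: real"]
  proof eventually_elim
    case (elim u)
    have "u powr (- \<mu>) \<le> 1"
      using elim assms powr_mono2'[of "- \<mu>" 1 u] by simp
    have "\<bar>cut_integrand \<nu> \<mu> t u\<bar> \<le> u powr (- \<mu>) * exp (- u * t + u powr \<nu>)"
      using elim by (intro abs_cut_integrand_le) simp
    also have "\<dots> \<le> exp (- u * t + u powr \<nu>)"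
      using \<open>u powr (- \<mu>) \<le> 1\<close> by (intro mult_left_le_one_le) auto
    also have "\<dots> \<le> u powr (- 2)"
      using elim by simp
    finally show ?case
      by simp
  qed
qed

lemma set_integrable_cut_integrand:
  assumes "0 \<le> \<nu>" "\<nu> < 1" "0 \<le> \<mu>" "\<mu> < 1" "0 < t"
  shows "set_integrable lborel {0..} (cut_integrand \<nu> \<mu> t)"
proof -
  have "set_integrable lborel ({0..1} \<union> {1..}) (cut_integrand \<nu> \<mu> t)"
    using assms
    by (intro set_integrable_Un set_integrable_cut_integrand_unit_interval set_integrable_cut_integrand_tail) auto
  moreover have "{0..1} \<union> {1..} = {0 :: real..}"
    by auto
  ultimately show ?thesis
    by simp
qed

lemma integrable_exp_neg_abs_powr:
  fixes \<kappa> \<nu> :: real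
  assumes "0 < \<kappa>" "0 < \<nu>"
  shows "integrable lborel (\<lambda>y. exp (- (\<kappa> * \<bar>y\<bar> powr \<nu>)))"
proof (rule integrable_lborel_if_halflines)
  show "set_integrable lborel {0..} (\<lambda>y. exp (- (\<kappa> * \<bar>y\<bar> powr \<nu>)))"
  proof (rule set_integrable_atLeast_if_powr_bound)
    show "continuous_on {0..} (\<lambda>y. exp (- (\<kappa> * \<bar>y\<bar> powr \<nu>)))"
      using assms by (intro continuous_intros continuous_on_powr') auto
    have "eventually (\<lambda>y. exp (- (\<kappa> * y powr \<nu>)) \<le> y powr (- 2)) at_top"
      using assms by real_asymp
    then show "eventually (\<lambda>y. norm (exp (- (\<kappa> * \<bar>y\<bar> powr \<nu>))) \<le> y powr (- 2)) at_top"
      using eventually_ge_at_top[of "0 :: real"] by eventually_elim simp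
  qed
  then show "set_integrable lborel {0..} (\<lambda>y. exp (- (\<kappa> * \<bar>- y\<bar> powr \<nu>)))"
    by simp
qed

lemma integrable_bromwich_integrand_vertical:
  assumes "0 < \<nu>" "\<nu> < 1" "0 \<le> \<mu>" "0 < c"
  shows "integrable lborel (\<lambda>y. bromwich_integrand \<nu> \<mu> t (Complex c y))"
proof (rule Bochner_Integration.integrable_bound)
  have "0 < cos (\<nu> * pi / 2)"
    using assms mult_strict_right_mono[of \<nu> 1 pi] by (intro cos_gt_zero) auto
  then show "integrable lborel (\<lambda>y. exp (t * c) * c powr (- \<mu>) * exp (- (cos (\<nu> * pi / 2) * \<bar>y\<bar> powr \<nu>)))"
    using assms by (intro integrable_mult_right integrable_exp_neg_abs_powr)
  have "continuous_on UNIV (\<lambda>y. bromwich_integrand \<nu> \<mu> t (Complex c y))"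
    unfolding bromwich_integrand_def using assms
    by (intro continuous_intros) (auto simp: Complex_eq complex_eq_iff)
  then show "(\<lambda>y. bromwich_integrand \<nu> \<mu> t (Complex c y)) \<in> borel_measurable lborel"
    by (simp add: borel_measurable_continuous_onI)
  show "AE y in lborel. norm (bromwich_integrand \<nu> \<mu> t (Complex c y))
                         \<le> norm (exp (t * c) * c powr (- \<mu>) * exp (- (cos (\<nu> * pi / 2) * \<bar>y\<bar> powr \<nu>)))"
    using norm_bromwich_integrand_vertical_le[of \<nu> \<mu> c t] assms by (intro AE_I2) simp
qed

section \<open>Cauchy's theorem on a contour around the negative real axis\<close>

text \<open>Rotating the principal logarithm moves its branch cut to the closed negative imaginary axis.
  The resulting kernel is holomorphic across the negative real axis and agrees with the integrand on
  the closed upper half-plane.\<close>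

definition Ln_upper :: "complex \<Rightarrow> complex" where
  "Ln_upper s = Ln (- \<i> * s) + \<i> * complex_of_real (pi / 2)"

lemma Ln_upper_eq_Ln:
  assumes "s \<noteq> 0" "0 \<le> Im s"
  shows "Ln_upper s = Ln s"
proof (rule Ln_unique[symmetric])
  have "exp (\<i> * complex_of_real (pi / 2)) = \<i>"
    by (metis cis_conv_exp cis_pi_half)
  then show "exp (Ln_upper s) = s"
    using assms unfolding Ln_upper_def by (simp only: exp_add exp_Ln) (simp add: algebra_simps)
  have "\<bar>Im (Ln (- \<i> * s))\<bar> \<le> pi / 2"
    using assms by (subst Re_Ln_pos_le) auto
  moreover have "Im (Ln_upper s) = Im (Ln (- \<i> * s)) + pi / 2"
    by (simp add: Ln_upper_def)
  ultimately show "- pi < Im (Ln_upper s)" "Im (Ln_upper s) \<le> pi"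
    using pi_gt_zero by linarith+
qed

definition bromwich_kernel :: "real \<Rightarrow> real \<Rightarrow> real \<Rightarrow> complex \<Rightarrow> complex" where
  "bromwich_kernel \<nu> \<mu> t s =
     exp (s * complex_of_real t - complex_of_real \<mu> * Ln_upper s - exp (complex_of_real \<nu> * Ln_upper s))"

lemma bromwich_kernel_eq_integrand:
  assumes "s \<noteq> 0" "0 \<le> Im s"
  shows "bromwich_kernel \<nu> \<mu> t s = bromwich_integrand \<nu> \<mu> t s"
  using assms by (simp add: bromwich_kernel_def bromwich_integrand_eq_exp Ln_upper_eq_Ln)

lemma holomorphic_on_bromwich_kernel:
  assumes "open S" "\<And>s. s \<in> S \<Longrightarrow> Re s = 0 \<Longrightarrow> 0 < Im s"
  shows "bromwich_kernel \<nu> \<mu> t holomorphic_on S"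
proof -
  have "- \<i> * s \<notin> \<real>\<^sub>\<le>\<^sub>0" if "s \<in> S" for s
    using assms(2)[OF that] by (auto simp: complex_nonpos_Reals_iff)
  then show ?thesis
    unfolding bromwich_kernel_def Ln_upper_def using assms by (intro holomorphic_intros) auto
qed

lemma continuous_on_bromwich_kernel:
  assumes "\<And>s. s \<in> S \<Longrightarrow> Re s = 0 \<Longrightarrow> 0 < Im s"
  shows "continuous_on S (bromwich_kernel \<nu> \<mu> t)"
proof -
  have "- \<i> * s \<notin> \<real>\<^sub>\<le>\<^sub>0" if "s \<in> S" for s
    using assms(1)[OF that] by (auto simp: complex_nonpos_Reals_iff)
  then show ?thesis
    unfolding bromwich_kernel_def Ln_upper_def using assms by (intro continuous_intros) auto
qed

lemma contour_integrable_bromwich_kernel: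
  assumes "convex S" "a \<in> S" "b \<in> S" "\<And>s. s \<in> S \<Longrightarrow> Re s = 0 \<Longrightarrow> 0 < Im s"
  shows "bromwich_kernel \<nu> \<mu> t contour_integrable_on linepath a b"
  using assms closed_segment_subset[of a S b]
  by (intro contour_integrable_continuous_linepath continuous_on_bromwich_kernel) auto

abbreviation segment_integral :: "real \<Rightarrow> real \<Rightarrow> real \<Rightarrow> complex \<Rightarrow> complex \<Rightarrow> complex" where
  "segment_integral \<nu> \<mu> t a b \<equiv> contour_integral (linepath a b) (bromwich_kernel \<nu> \<mu> t)"

lemma segment_integral_primitive_on_halfplane:
  assumes "0 < e"
  obtains g where "\<And>a b. e < Im a + k * Re a \<Longrightarrow> e < Im b + k * Re b \<Longrightarrow>
                      segment_integral \<nu> \<mu> t a b = g b - g a"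
proof -
  have H: "{s. e < Im s + k * Re s} = {s. e < inner (Complex k 1) s}"
    by (auto simp: inner_complex_def algebra_simps)
  have "open {s. e < Im s + k * Re s}" "convex {s. e < Im s + k * Re s}"
    unfolding H by (rule open_halfspace_gt, rule convex_halfspace_gt)
  moreover have "bromwich_kernel \<nu> \<mu> t holomorphic_on {s. e < Im s + k * Re s}"
    using assms by (intro holomorphic_on_bromwich_kernel[OF \<open>open _\<close>]) auto
  ultimately obtain g where "\<And>a b. a \<in> {s. e < Im s + k * Re s} \<Longrightarrow> b \<in> {s. e < Im s + k * Re s} \<Longrightarrow>
                                segment_integral \<nu> \<mu> t a b = g b - g a"
    by (metis holomorphic_linepath_integral_primitive)
  then show ?thesis using that by blast
qed

definition small_detour :: "real \<Rightarrow> real \<Rightarrow> real \<Rightarrow> real \<Rightarrow> complex" where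
  "small_detour \<nu> \<mu> t e =
     segment_integral \<nu> \<mu> t (Complex (- e) 0) (Complex (- e) e)
     + segment_integral \<nu> \<mu> t (Complex (- e) e) (Complex 0 e)
     + segment_integral \<nu> \<mu> t (Complex 0 e) (Complex e e)
     + segment_integral \<nu> \<mu> t (Complex e e) (Complex e 0)"

definition large_arc :: "real \<Rightarrow> real \<Rightarrow> real \<Rightarrow> real \<Rightarrow> real \<Rightarrow> complex" where
  "large_arc \<nu> \<mu> t c R =
     segment_integral \<nu> \<mu> t (Complex c R) (Complex 0 R)
     + segment_integral \<nu> \<mu> t (Complex 0 R) (Complex (- R) R)
     + segment_integral \<nu> \<mu> t (Complex (- R) R) (Complex (- R) 0)"

text \<open>The contour is cut along the imaginary axis into two closed polygons, each inside a half-plane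
  avoiding the branch cut, where the kernel has a primitive and the segment integrals telescope.\<close>

lemma closed_contour_integral_eq_0:
  assumes "0 < e" "e < c" "e < R"
  shows "segment_integral \<nu> \<mu> t (Complex (- R) 0) (Complex (- e) 0) + small_detour \<nu> \<mu> t e
         + segment_integral \<nu> \<mu> t (Complex e 0) (Complex c 0)
         + segment_integral \<nu> \<mu> t (Complex c 0) (Complex c R) + large_arc \<nu> \<mu> t c R = 0"
proof -
  obtain gL where gL: "\<And>a b. e / 2 < Im a - Re a \<Longrightarrow> e / 2 < Im b - Re b \<Longrightarrow>
                              segment_integral \<nu> \<mu> t a b = gL b - gL a"
    using segment_integral_primitive_on_halfplane[of "e / 2" "- 1" \<nu> \<mu> t] assms(1) by auto
  obtain gR where gR: "\<And>a b. e / 2 < Im a + Re a \<Longrightarrow> e / 2 < Im b + Re b \<Longrightarrow>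
                              segment_integral \<nu> \<mu> t a b = gR b - gR a"
    using segment_integral_primitive_on_halfplane[of "e / 2" 1 \<nu> \<mu> t] assms(1) by auto
  have left: "segment_integral \<nu> \<mu> t (Complex (- R) 0) (Complex (- e) 0)
      + segment_integral \<nu> \<mu> t (Complex (- e) 0) (Complex (- e) e)
      + segment_integral \<nu> \<mu> t (Complex (- e) e) (Complex 0 e)
      + segment_integral \<nu> \<mu> t (Complex 0 e) (Complex 0 R)
      + segment_integral \<nu> \<mu> t (Complex 0 R) (Complex (- R) R)
      + segment_integral \<nu> \<mu> t (Complex (- R) R) (Complex (- R) 0) = 0"
    using assms by (simp add: gL)
  have right: "segment_integral \<nu> \<mu> t (Complex e 0) (Complex c 0)
      + segment_integral \<nu> \<mu> t (Complex c 0) (Complex c R)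
      + segment_integral \<nu> \<mu> t (Complex c R) (Complex 0 R)
      + segment_integral \<nu> \<mu> t (Complex 0 e) (Complex e e)
      + segment_integral \<nu> \<mu> t (Complex e e) (Complex e 0)
      = segment_integral \<nu> \<mu> t (Complex 0 e) (Complex 0 R)"
    using assms by (simp add: gR)
  show ?thesis
    unfolding small_detour_def large_arc_def
    using arg_cong2[OF left right, of "(+)"] by (simp add: algebra_simps)
qed

lemma segment_integral_vertical:
  assumes "0 < c" "0 < R"
  shows "segment_integral \<nu> \<mu> t (Complex c 0) (Complex c R)
           = \<i> * integral {0..R} (\<lambda>y. bromwich_integrand \<nu> \<mu> t (Complex c y))"
proof -
  define I where "I = segment_integral \<nu> \<mu> t (Complex c 0) (Complex c R)"
  have ends: "Complex c 0 = of_real c + of_real 0 * \<i>" "Complex c R = of_real c + of_real R * \<i>"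
    by (simp_all add: complex_eq_iff)
  have "(bromwich_kernel \<nu> \<mu> t has_contour_integral I) (linepath (Complex c 0) (Complex c R))"
    unfolding I_def
    by (rule has_contour_integral_integral, rule contour_integrable_bromwich_kernel[of "{s. 0 < Re s}"])
       (use assms in \<open>auto simp: convex_halfspace_Re_gt\<close>)
  then have "((\<lambda>y. \<i> * bromwich_kernel \<nu> \<mu> t (of_real c + of_real y * \<i>)) has_integral I) {0..R}"
    using assms unfolding ends by (subst (asm) has_contour_integral_affine_linepath_iff) auto
  then have "((\<lambda>y. \<i> * bromwich_integrand \<nu> \<mu> t (Complex c y)) has_integral I) {0..R}"
  proof (rule has_integral_eq[rotated])
    fix y assume "y \<in> {0..R}"
    then show "\<i> * bromwich_kernel \<nu> \<mu> t (of_real c + of_real y * \<i>) = \<i> * bromwich_integrand \<nu> \<mu> t (Complex c y)"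
      using assms by (subst bromwich_kernel_eq_integrand) (auto simp: Complex_eq mult.commute complex_eq_iff)
  qed
  then have "integral {0..R} (\<lambda>y. \<i> * bromwich_integrand \<nu> \<mu> t (Complex c y)) = I"
    by (rule integral_unique)
  then show ?thesis
    unfolding I_def by simp
qed

lemma Im_segment_integral_negative_axis:
  assumes "0 < e" "e < R"
  shows "Im (segment_integral \<nu> \<mu> t (Complex (- R) 0) (Complex (- e) 0))
           = - integral {e..R} (cut_integrand \<nu> \<mu> t)"
proof -
  define I where "I = segment_integral \<nu> \<mu> t (Complex (- R) 0) (Complex (- e) 0)"
  have "(bromwich_kernel \<nu> \<mu> t has_contour_integral I) (linepath (Complex (- R) 0) (Complex (- e) 0))"
    unfolding I_def
    by (rule has_contour_integral_integral, rule contour_integrable_bromwich_kernel[of "{s. Re s < 0}"])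
       (use assms in \<open>auto simp: convex_halfspace_Re_lt\<close>)
  then have "((\<lambda>x. bromwich_kernel \<nu> \<mu> t (of_real x)) has_integral I) {- R..- e}"
    using assms by (subst (asm) has_contour_integral_linepath_Reals_iff) (auto simp: complex_is_Real_iff)
  then have "((\<lambda>u. bromwich_kernel \<nu> \<mu> t (of_real (- u))) has_integral I) {e..R}"
    using has_integral_reflect_real[where f = "\<lambda>u. bromwich_kernel \<nu> \<mu> t (of_real (- u))" and a = e and b = R]
    by simp
  then have "((\<lambda>u. Im (bromwich_kernel \<nu> \<mu> t (of_real (- u)))) has_integral Im I) {e..R}"
    using has_integral_linear[OF _ bounded_linear_Im] by (simp add: o_def)
  then have "((\<lambda>u. - cut_integrand \<nu> \<mu> t u) has_integral Im I) {e..R}"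
  proof (rule has_integral_eq[rotated])
    fix u assume "u \<in> {e..R}"
    then have "0 < u" using assms by auto
    then show "Im (bromwich_kernel \<nu> \<mu> t (of_real (- u))) = - cut_integrand \<nu> \<mu> t u"
      by (simp add: bromwich_kernel_eq_integrand Im_bromwich_integrand_minus_of_real)
  qed
  then have "integral {e..R} (\<lambda>u. - cut_integrand \<nu> \<mu> t u) = Im I"
    by (rule integral_unique)
  then show ?thesis
    unfolding I_def by simp
qed

lemma Im_segment_integral_positive_axis:
  assumes "0 < a" "a < b"
  shows "Im (segment_integral \<nu> \<mu> t (Complex a 0) (Complex b 0)) = 0"
proof -
  define I where "I = segment_integral \<nu> \<mu> t (Complex a 0) (Complex b 0)"
  have "(bromwich_kernel \<nu> \<mu> t has_contour_integral I) (linepath (Complex a 0) (Complex b 0))"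
    unfolding I_def
    by (rule has_contour_integral_integral, rule contour_integrable_bromwich_kernel[of "{s. 0 < Re s}"])
       (use assms in \<open>auto simp: convex_halfspace_Re_gt\<close>)
  then have "((\<lambda>x. bromwich_kernel \<nu> \<mu> t (of_real x)) has_integral I) {a..b}"
    using assms by (subst (asm) has_contour_integral_linepath_Reals_iff) (auto simp: complex_is_Real_iff)
  then have "((\<lambda>x. Im (bromwich_kernel \<nu> \<mu> t (of_real x))) has_integral Im I) {a..b}"
    using has_integral_linear[OF _ bounded_linear_Im] by (simp add: o_def)
  then have "((\<lambda>x. 0) has_integral Im I) {a..b}"
  proof (rule has_integral_eq[rotated])
    fix x assume "x \<in> {a..b}"
    then have "0 < x" using assms by auto
    then show "Im (bromwich_kernel \<nu> \<mu> t (of_real x)) = 0"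
      by (simp add: bromwich_kernel_eq_integrand Im_bromwich_integrand_of_real)
  qed
  then show ?thesis
    unfolding I_def by (simp add: has_integral_0_eq)
qed

lemma Re_vertical_integral_eq_cut_integral_truncated:
  assumes "0 < e" "e < c" "e < R"
  shows "Re (integral {0..R} (\<lambda>y. bromwich_integrand \<nu> \<mu> t (Complex c y))) + Im (large_arc \<nu> \<mu> t c R)
           = integral {e..R} (cut_integrand \<nu> \<mu> t) - Im (small_detour \<nu> \<mu> t e)"
proof -
  have "Im (segment_integral \<nu> \<mu> t (Complex (- R) 0) (Complex (- e) 0) + small_detour \<nu> \<mu> t e
         + segment_integral \<nu> \<mu> t (Complex e 0) (Complex c 0)
         + segment_integral \<nu> \<mu> t (Complex c 0) (Complex c R) + large_arc \<nu> \<mu> t c R) = 0"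
    using closed_contour_integral_eq_0[OF assms] by simp
  then show ?thesis
    using assms by (simp add: Im_segment_integral_negative_axis Im_segment_integral_positive_axis
                              segment_integral_vertical)
qed

section \<open>Shrinking the detour and expanding the arc\<close>

lemma norm_segment_integral_le:
  assumes "convex S" "a \<in> S" "b \<in> S" "\<And>s. s \<in> S \<Longrightarrow> s \<noteq> 0 \<and> 0 \<le> Im s"
    and "\<And>s. s \<in> S \<Longrightarrow> norm (bromwich_integrand \<nu> \<mu> t s) \<le> B"
  shows "norm (segment_integral \<nu> \<mu> t a b) \<le> B * cmod (b - a)"
proof -
  have "(bromwich_kernel \<nu> \<mu> t has_contour_integral segment_integral \<nu> \<mu> t a b) (linepath a b)"
  proof (rule has_contour_integral_integral, rule contour_integrable_bromwich_kernel[OF assms(1-3)])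
    fix s assume "s \<in> S" "Re s = 0"
    with assms(4)[OF \<open>s \<in> S\<close>] show "0 < Im s"
      by (auto simp: complex_eq_iff)
  qed
  moreover have "0 \<le> B"
    using assms(2,5) norm_ge_zero order_trans by blast
  moreover have "norm (bromwich_kernel \<nu> \<mu> t s) \<le> B" if "s \<in> closed_segment a b" for s
  proof -
    have "s \<in> S"
      using that closed_segment_subset[OF assms(2,3,1)] by blast
    then show ?thesis
      using assms(4,5) by (simp add: bromwich_kernel_eq_integrand)
  qed
  ultimately show ?thesis
    by (rule has_contour_integral_bound_linepath)
qed

lemma norm_small_detour_le:
  assumes "0 \<le> \<nu>" "0 \<le> \<mu>" "0 \<le> t" "0 < e" "e \<le> 1 / 2"
  shows "norm (small_detour \<nu> \<mu> t e) \<le> 4 * e * (exp (t + 1) * e powr (- \<mu>))"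
proof -
  define B where "B = exp (t + 1) * e powr (- \<mu>)"
  \<comment> \<open>Each side lies in a convex part of the box that stays at distance \<open>e\<close> from 0.\<close>
  define S where "S w = cbox (Complex (- e) 0) (Complex e e) \<inter> {s. e \<le> inner w s}" for w :: complex
  have side: "norm (segment_integral \<nu> \<mu> t a b) \<le> B * e"
    if "a \<in> S w" "b \<in> S w" "norm w = 1" "cmod (b - a) = e" for a b w
  proof -
    have "norm (segment_integral \<nu> \<mu> t a b) \<le> B * cmod (b - a)"
    proof (rule norm_segment_integral_le)
      show "convex (S w)"
        by (simp add: S_def convex_Int convex_halfspace_ge)
      fix s assume "s \<in> S w"
      then have box: "\<bar>Re s\<bar> \<le> e" "0 \<le> Im s" "Im s \<le> e" and "e \<le> inner w s"
        by (auto simp: S_def in_cbox_complex_iff)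
      moreover have "inner w s \<le> cmod s"
        using norm_cauchy_schwarz[of w s] \<open>norm w = 1\<close> by simp
      moreover have "cmod s \<le> 1"
        using cmod_le[of s] box assms(5) by linarith
      ultimately show "s \<noteq> 0 \<and> 0 \<le> Im s" "norm (bromwich_integrand \<nu> \<mu> t s) \<le> B"
        using assms unfolding B_def by (auto intro!: norm_bromwich_integrand_le_near_0)
    qed (use that in auto)
    with that show ?thesis by simp
  qed
  have "norm (segment_integral \<nu> \<mu> t (Complex (- e) 0) (Complex (- e) e)) \<le> B * e"
    by (rule side[of _ "- 1"])
       (use assms in \<open>auto simp: S_def in_cbox_complex_iff inner_complex_def complex_diff complex_norm\<close>)
  moreover have "norm (segment_integral \<nu> \<mu> t (Complex (- e) e) (Complex 0 e)) \<le> B * e"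
    by (rule side[of _ \<i>])
       (use assms in \<open>auto simp: S_def in_cbox_complex_iff inner_complex_def complex_diff complex_norm\<close>)
  moreover have "norm (segment_integral \<nu> \<mu> t (Complex 0 e) (Complex e e)) \<le> B * e"
    by (rule side[of _ \<i>])
       (use assms in \<open>auto simp: S_def in_cbox_complex_iff inner_complex_def complex_diff complex_norm\<close>)
  moreover have "norm (segment_integral \<nu> \<mu> t (Complex e e) (Complex e 0)) \<le> B * e"
    by (rule side[of _ 1])
       (use assms in \<open>auto simp: S_def in_cbox_complex_iff inner_complex_def complex_diff complex_norm\<close>)
  ultimately have "norm (small_detour \<nu> \<mu> t e) \<le> B * e + B * e + B * e + B * e"
    unfolding small_detour_def by (smt (verit) norm_triangle_ineq)
  then show ?thesis
    by (simp add: B_def)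
qed

lemma norm_large_arc_le:
  assumes "0 \<le> \<nu>" "0 \<le> \<mu>" "0 \<le> t" "pi / 2 \<le> \<phi>" "\<phi> \<le> pi" "\<nu> * \<phi> \<le> pi / 2"
    and "0 < c" "1 \<le> R" "c \<le> R"
  shows "norm (large_arc \<nu> \<mu> t c R)
           \<le> (c + 2 * R) * (exp (t * c - cos (\<nu> * \<phi>) * R powr \<nu>) + exp (t * R * cos \<phi> + (2 * R) powr \<nu>))"
proof -
  define B where "B = exp (t * c - cos (\<nu> * \<phi>) * R powr \<nu>) + exp (t * R * cos \<phi> + (2 * R) powr \<nu>)"
  define S where "S w = cbox (Complex (- R) 0) (Complex c R) \<inter> {s. R \<le> inner w s}" for w :: complex
  have side: "norm (segment_integral \<nu> \<mu> t a b) \<le> B * cmod (b - a)"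
    if "a \<in> S w" "b \<in> S w" "norm w = 1" for a b w
  proof (rule norm_segment_integral_le)
    show "convex (S w)"
      by (simp add: S_def convex_Int convex_halfspace_ge)
    fix s assume "s \<in> S w"
    then have box: "\<bar>Re s\<bar> \<le> R" "Re s \<le> c" "0 \<le> Im s" "Im s \<le> R" and "R \<le> inner w s"
      using assms by (auto simp: S_def in_cbox_complex_iff)
    moreover have "inner w s \<le> cmod s"
      using norm_cauchy_schwarz[of w s] \<open>norm w = 1\<close> by simp
    moreover have "cmod s \<le> 2 * R"
      using cmod_le[of s] box by linarith
    ultimately show "s \<noteq> 0 \<and> 0 \<le> Im s" "norm (bromwich_integrand \<nu> \<mu> t s) \<le> B"
      using assms unfolding B_def by (auto intro!: norm_bromwich_integrand_le_far)
  qed (use that in auto)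
  have "norm (segment_integral \<nu> \<mu> t (Complex c R) (Complex 0 R)) \<le> B * c"
    using side[of "Complex c R" \<i> "Complex 0 R"] assms
    by (auto simp: S_def in_cbox_complex_iff inner_complex_def complex_diff complex_norm)
  moreover have "norm (segment_integral \<nu> \<mu> t (Complex 0 R) (Complex (- R) R)) \<le> B * R"
    using side[of "Complex 0 R" \<i> "Complex (- R) R"] assms
    by (auto simp: S_def in_cbox_complex_iff inner_complex_def complex_diff complex_norm)
  moreover have "norm (segment_integral \<nu> \<mu> t (Complex (- R) R) (Complex (- R) 0)) \<le> B * R"
    using side[of "Complex (- R) R" "- 1" "Complex (- R) 0"] assms
    by (auto simp: S_def in_cbox_complex_iff inner_complex_def complex_diff complex_norm)
  ultimately have "norm (large_arc \<nu> \<mu> t c R) \<le> B * c + B * R + B * R"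
    unfolding large_arc_def by (smt (verit) norm_triangle_ineq)
  then show ?thesis
    by (simp add: B_def algebra_simps)
qed

lemma Im_small_detour_tendsto_0:
  assumes "0 \<le> \<nu>" "0 \<le> \<mu>" "\<mu> < 1" "0 \<le> t"
  shows "((\<lambda>e. Im (small_detour \<nu> \<mu> t e)) \<longlongrightarrow> 0) (at_right 0)"
proof (rule Lim_null_comparison)
  have "eventually (\<lambda>e. e \<in> {0<..<1 / 2}) (at_right (0 :: real))"
    by (rule eventually_at_right_real) simp
  then show "eventually (\<lambda>e. norm (Im (small_detour \<nu> \<mu> t e)) \<le> 4 * e * (exp (t + 1) * e powr (- \<mu>)))
               (at_right 0)"
  proof eventually_elim
    case (elim e)
    then show ?case
      using abs_Im_le_cmod[of "small_detour \<nu> \<mu> t e"] norm_small_detour_le[of \<nu> \<mu> t e] assms by auto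
  qed
  show "((\<lambda>e. 4 * e * (exp (t + 1) * e powr (- \<mu>))) \<longlongrightarrow> 0) (at_right 0)"
    using assms by real_asymp
qed

lemma arc_angle_exists:
  fixes \<nu> :: real
  assumes "0 < \<nu>" "\<nu> < 1"
  obtains \<phi> where "pi / 2 < \<phi>" "\<phi> < pi" "\<nu> * \<phi> < pi / 2"
proof
  show "pi / 2 < pi * (3 - \<nu>) / 4"
    using mult_strict_left_mono[of 2 "3 - \<nu>" pi] assms by simp
  show "pi * (3 - \<nu>) / 4 < pi"
    using mult_strict_left_mono[of "3 - \<nu>" 4 pi] assms by simp
  have "\<nu> * (3 - \<nu>) < 2"
    using mult_pos_pos[of "1 - \<nu>" "2 - \<nu>"] assms by (simp add: algebra_simps)
  then show "\<nu> * (pi * (3 - \<nu>) / 4) < pi / 2"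
    using mult_strict_left_mono[of "\<nu> * (3 - \<nu>)" 2 pi] by (simp add: field_simps)
qed

lemma Im_large_arc_tendsto_0:
  assumes "0 < \<nu>" "\<nu> < 1" "0 \<le> \<mu>" "0 < t" "0 < c"
  shows "((\<lambda>R. Im (large_arc \<nu> \<mu> t c R)) \<longlongrightarrow> 0) at_top"
proof -
  obtain \<phi> where \<phi>: "pi / 2 < \<phi>" "\<phi> < pi" "\<nu> * \<phi> < pi / 2"
    using arc_angle_exists[OF assms(1,2)] by blast
  define k where "k = cos (\<nu> * \<phi>)"
  define q where "q = t * cos \<phi>"
  have "q < 0"
    unfolding q_def using \<phi> assms by (intro mult_pos_neg cos_lt_zero_pi) auto
  have "0 < k"
    unfolding k_def using \<phi> assms pi_gt_zero by (intro cos_gt_zero mult_pos_pos) linarith+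
  show ?thesis
  proof (rule Lim_null_comparison)
    show "eventually (\<lambda>R. norm (Im (large_arc \<nu> \<mu> t c R))
            \<le> (c + 2 * R) * (exp (t * c - k * R powr \<nu>) + exp (q * R + (2 * R) powr \<nu>))) at_top"
      using eventually_ge_at_top[of "max c 1"]
    proof eventually_elim
      case (elim R)
      then show ?case
        using abs_Im_le_cmod[of "large_arc \<nu> \<mu> t c R"] norm_large_arc_le[of \<nu> \<mu> t \<phi> c R] \<phi> assms
        by (auto simp: k_def q_def mult_ac)
    qed
    show "((\<lambda>R. (c + 2 * R) * (exp (t * c - k * R powr \<nu>) + exp (q * R + (2 * R) powr \<nu>))) \<longlongrightarrow> 0) at_top"
      using \<open>q < 0\<close> \<open>0 < k\<close> assms by real_asymp
  qed
qed

lemma Re_vertical_integral_eq_cut_integral_upto: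
  assumes "0 < \<nu>" "\<nu> < 1" "0 \<le> \<mu>" "\<mu> < 1" "0 < t" "0 < c" "0 < R"
  shows "Re (LBINT y:{0..R}. bromwich_integrand \<nu> \<mu> t (Complex c y)) + Im (large_arc \<nu> \<mu> t c R)
           = (LBINT u:{0..R}. cut_integrand \<nu> \<mu> t u)"
proof -
  define L where "L = Re (LBINT y:{0..R}. bromwich_integrand \<nu> \<mu> t (Complex c y)) + Im (large_arc \<nu> \<mu> t c R)"
  have "set_integrable lborel {0..R} (\<lambda>y. bromwich_integrand \<nu> \<mu> t (Complex c y))"
    unfolding set_integrable_def
    using assms by (intro integrable_mult_indicator integrable_bromwich_integrand_vertical) auto
  then have L_eq: "L = Re (integral {0..R} (\<lambda>y. bromwich_integrand \<nu> \<mu> t (Complex c y))) + Im (large_arc \<nu> \<mu> t c R)"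
    unfolding L_def by (simp add: set_borel_integral_eq_integral)
  have G_int: "set_integrable lborel A (cut_integrand \<nu> \<mu> t)" if "A \<in> sets lborel" "A \<subseteq> {0..}" for A
    using set_integrable_subset[OF set_integrable_cut_integrand] that assms by auto
  have "eventually (\<lambda>e. e \<in> {0<..<min (min c R) (1 / 2)}) (at_right 0)"
    using assms by (intro eventually_at_right_real) auto
  then have ev: "eventually (\<lambda>e. (LBINT u:{e..R}. cut_integrand \<nu> \<mu> t u) - Im (small_detour \<nu> \<mu> t e) = L)
                   (at_right 0)"
  proof eventually_elim
    case (elim e)
    then have "(LBINT u:{e..R}. cut_integrand \<nu> \<mu> t u) = integral {e..R} (cut_integrand \<nu> \<mu> t)"
      by (intro set_borel_integral_eq_integral G_int) auto
    then show ?case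
      using Re_vertical_integral_eq_cut_integral_truncated[of e c R \<nu> \<mu> t] elim by (simp add: L_eq)
  qed
  have lim: "((\<lambda>e. (LBINT u:{e..R}. cut_integrand \<nu> \<mu> t u) - Im (small_detour \<nu> \<mu> t e))
                   \<longlongrightarrow> (LBINT u:{0<..R}. cut_integrand \<nu> \<mu> t u) - 0) (at_right 0)"
  proof (intro tendsto_diff)
    show "((\<lambda>e. LBINT u:{e..R}. cut_integrand \<nu> \<mu> t u) \<longlongrightarrow> (LBINT u:{0<..R}. cut_integrand \<nu> \<mu> t u)) (at_right 0)"
      using assms by (intro tendsto_set_lebesgue_integral_at_right G_int) auto
    show "((\<lambda>e. Im (small_detour \<nu> \<mu> t e)) \<longlongrightarrow> 0) (at_right 0)"
      using assms by (intro Im_small_detour_tendsto_0) auto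
  qed
  have "((\<lambda>e. L) \<longlongrightarrow> (LBINT u:{0<..R}. cut_integrand \<nu> \<mu> t u) - 0) (at_right (0 :: real))"
    using lim ev by (rule Lim_transform_eventually)
  then have "L = (LBINT u:{0<..R}. cut_integrand \<nu> \<mu> t u)"
    by (simp add: tendsto_const_iff)
  also have "\<dots> = (LBINT u:{0..R}. cut_integrand \<nu> \<mu> t u)"
    by (rule set_integral_discrete_difference[where X = "{0}"]) auto
  finally show ?thesis
    unfolding L_def .
qed

lemma Re_vertical_integral_eq_cut_integral:
  assumes "0 < \<nu>" "\<nu> < 1" "0 \<le> \<mu>" "\<mu> < 1" "0 < t" "0 < c"
  shows "Re (LBINT y:{0..}. bromwich_integrand \<nu> \<mu> t (Complex c y)) = (LBINT u:{0..}. cut_integrand \<nu> \<mu> t u)"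
proof -
  have arc: "((\<lambda>R. Im (large_arc \<nu> \<mu> t c R)) \<longlongrightarrow> 0) at_top"
    using assms by (intro Im_large_arc_tendsto_0) auto
  have "((\<lambda>R. Re (LBINT y:{0..R}. bromwich_integrand \<nu> \<mu> t (Complex c y)) + Im (large_arc \<nu> \<mu> t c R))
          \<longlongrightarrow> Re (LBINT y:{0..}. bromwich_integrand \<nu> \<mu> t (Complex c y)) + 0) at_top"
    using assms
    by (intro tendsto_add tendsto_Re arc tendsto_set_lebesgue_integral_at_top)
       (auto simp: set_integrable_def intro!: integrable_mult_indicator integrable_bromwich_integrand_vertical)
  moreover have "eventually (\<lambda>R. Re (LBINT y:{0..R}. bromwich_integrand \<nu> \<mu> t (Complex c y)) + Im (large_arc \<nu> \<mu> t c R)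
                                 = (LBINT u:{0..R}. cut_integrand \<nu> \<mu> t u)) at_top"
    using eventually_gt_at_top[of 0]
    by eventually_elim (use assms in \<open>simp add: Re_vertical_integral_eq_cut_integral_upto\<close>)
  ultimately have lim_F: "((\<lambda>R. LBINT u:{0..R}. cut_integrand \<nu> \<mu> t u)
                     \<longlongrightarrow> Re (LBINT y:{0..}. bromwich_integrand \<nu> \<mu> t (Complex c y))) at_top"
    by (simp add: tendsto_cong)
  moreover have "((\<lambda>R. LBINT u:{0..R}. cut_integrand \<nu> \<mu> t u) \<longlongrightarrow> (LBINT u:{0..}. cut_integrand \<nu> \<mu> t u)) at_top"
    using assms by (intro tendsto_set_lebesgue_integral_at_top set_integrable_cut_integrand) auto
  ultimately show ?thesis
    by (rule tendsto_unique[rotated]) simp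
qed

theorem mainTheorem1:
  fixes \<nu> \<mu> c t :: real
  assumes "0 < \<nu>" and "\<nu> < 1" and "0 \<le> \<mu>" and "\<mu> < 1"
    and "0 < c" and "0 < t"
  shows "bromwich_f \<nu> \<mu> c t =
    complex_of_real ((1 / pi) *
      (LBINT u:{0<..}. u powr (- \<mu>) * exp (- u * t - u powr \<nu> * cos (pi * \<nu>))
                        * sin (u powr \<nu> * sin (pi * \<nu>) + pi * \<mu>)))"
proof -
  have sym: "bromwich_integrand \<nu> \<mu> t (Complex c (- y)) = cnj (bromwich_integrand \<nu> \<mu> t (Complex c y))" for y
  proof -
    have "Complex c (- y) = cnj (Complex c y)"
      by (simp add: complex_eq_iff)
    then show ?thesis
      using bromwich_integrand_cnj[of "Complex c y" \<nu> \<mu> t] assms by simp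
  qed
  have "bromwich_f \<nu> \<mu> c t
          = complex_of_real (1 / (2 * pi) * (2 * Re (LBINT y:{0..}. bromwich_integrand \<nu> \<mu> t (Complex c y))))"
    using assms
    by (simp add: bromwich_f_eq_integral_bromwich_integrand lborel_integral_eq_two_Re_if_cnj_symmetric
                  integrable_bromwich_integrand_vertical sym)
  also have "Re (LBINT y:{0..}. bromwich_integrand \<nu> \<mu> t (Complex c y)) = (LBINT u:{0..}. cut_integrand \<nu> \<mu> t u)"
    using assms by (intro Re_vertical_integral_eq_cut_integral) auto
  also have "\<dots> = (LBINT u:{0<..}. cut_integrand \<nu> \<mu> t u)"
    by (rule set_integral_discrete_difference[where X = "{0}"]) auto
  finally show ?thesis
    by (simp add: cut_integrand_def)
qed

end
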